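(* Let $\Theta_n^{(\eta)}$ and $\Theta_n^{(f)}$ be sets of real functions on the covariate space, where every $f\in\Theta_n^{(f)}$ satisfies $\|f\|_\infty\le N_n$ for a number $N_n>0$, and let $\Theta_n=\Theta_n^{(\eta)}\times\Theta_n^{(f)}$, whose elements $(\eta,f)$ are identified with the conditional densities $\mathcal{P}_{\eta,V}$, $V=e^f$. Then, for every $\epsilon>0$, $$\log N(3\epsilon,\Theta_n,d_n)\lesssim\log N(\epsilon/e^{N_n},\Theta_n^{(\eta)},\|\cdot\|_n)+\log N(\epsilon,\Theta_n^{(f)},\|\cdot\|_n),$$ where the constant implicit in $\lesssim$ does not depend on $\epsilon$ or $n$.
   Context: Let $Q$ be a probability measure on the covariate space $[0,1]^d$ (either the covariate distribution or the empirical measure of fixed design points). For functions $\eta$ and $V>0$ let $\mathcal{P}_{\eta,V}(y\mid x)=(2\pi V(x))^{-1/2}\exp(-(y-\eta(x))^2/(2V(x)))$, and let $d_n^2(\mathcal{P}_{\eta_1,V_1},\mathcal{P}_{\eta_2,V_2})=\int\!\!\int(\mathcal{P}_{\eta_1,V_1}^{1/2}-\mathcal{P}_{\eta_2,V_2}^{1/2})^2\,dy\,dQ(x)$. $\|\cdot\|_n$ denotes the norm of $L_2(Q)$ and $\|\cdot\|_\infty$ the supremum norm. $N(\epsilon,S,\rho)$ is the $\epsilon$-covering number of $S$ with respect to $\rho$ (minimal number of $\rho$-balls of radius $\epsilon$ covering $S$). *)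

theory Defs
  imports "HOL-Probability.Probability" "HOL-Library.Extended_Nat"
begin

definition unit_cube :: "(real ^ 'd) set" where
  "unit_cube = {x. \<forall>i. 0 \<le> x $ i \<and> x $ i \<le> 1}"

definition gauss_dens :: "('x \<Rightarrow> real) \<Rightarrow> ('x \<Rightarrow> real) \<Rightarrow> 'x \<Rightarrow> real \<Rightarrow> real" where
  "gauss_dens \<eta> V x y = exp (- (y - \<eta> x)\<^sup>2 / (2 * V x)) / sqrt (2 * pi * V x)"

definition dn_sq :: "'x measure \<Rightarrow> (('x \<Rightarrow> real) \<times> ('x \<Rightarrow> real))
                    \<Rightarrow> (('x \<Rightarrow> real) \<times> ('x \<Rightarrow> real)) \<Rightarrow> ennreal" where
  "dn_sq Q p q =
     (\<integral>\<^sup>+ x. (\<integral>\<^sup>+ y. ennreal ((sqrt (gauss_dens (fst p) (\<lambda>z. exp (snd p z)) x y)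
                               - sqrt (gauss_dens (fst q) (\<lambda>z. exp (snd q z)) x y))\<^sup>2) \<partial>lborel) \<partial>Q)"

definition L2_sq :: "'x measure \<Rightarrow> ('x \<Rightarrow> real) \<Rightarrow> ('x \<Rightarrow> real) \<Rightarrow> ennreal" where
  "L2_sq Q f g = (\<integral>\<^sup>+ x. ennreal ((f x - g x)\<^sup>2) \<partial>Q)"

text \<open>Covering number N(eps, S, rho) for a distance rho given through its square
  (closed balls of radius eps, centres in S); infinity if no finite cover exists.\<close>
definition covering_number :: "('a \<Rightarrow> 'a \<Rightarrow> ennreal) \<Rightarrow> real \<Rightarrow> 'a set \<Rightarrow> enat" where
  "covering_number dsq \<epsilon> S =
     (INF C \<in> {C. finite C \<and> C \<subseteq> S \<and> S \<subseteq> (\<Union>c\<in>C. {s. dsq c s \<le> ennreal (\<epsilon>\<^sup>2)})}.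
        enat (card C))"

end

theory Submission
  imports Defs
begin

text \<open>
  The squared Hellinger distance between two normal densities has a closed form in terms of
  their Bhattacharyya coefficient. If the log-variances are bounded below by -N, it is at most
  e^N/4 (\<eta>1 - \<eta>2)^2 + (f1 - f2)^2/2 at every covariate, so integrating gives
  d_n^2 \<le> e^N/4 \<parallel>\<eta>1 - \<eta>2\<parallel>_n^2 + \<parallel>f1 - f2\<parallel>_n^2/2. Hence the product of an \<epsilon>/e^N-net of the
  means and an \<epsilon>-net of the log-variances is a 3\<epsilon>-net of \<Theta>_n, the covering numbers
  multiply, and the constant in the logarithmic bound is 1.
\<close>

lemma sqrt_exp: "sqrt (exp t) = exp (t / 2)"
  by (rule real_sqrt_unique) (simp_all add: power2_eq_square flip: exp_add)

lemma normal_density_sqrt_variance: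
  assumes "p > 0"
  shows "normal_density a (sqrt p) y = exp (- (y - a)\<^sup>2 / (2 * p)) / sqrt (2 * pi * p)"
  using assms by (simp add: normal_density_def)

lemma gauss_dens_exp_eq_normal_density:
  "gauss_dens \<eta> (\<lambda>z. exp (f z)) x y = normal_density (\<eta> x) (sqrt (exp (f x))) y"
  by (simp add: gauss_dens_def normal_density_def)

text \<open>The Bhattacharyya coefficient of normal densities with means a, b and variances
  p, q; see sqrt_normal_density_mult.\<close>
definition gauss_affinity :: "real \<Rightarrow> real \<Rightarrow> real \<Rightarrow> real \<Rightarrow> real" where
  "gauss_affinity a b p q = sqrt (2 * sqrt (p * q) / (p + q)) * exp (- (a - b)\<^sup>2 / (4 * (p + q)))"

lemma gauss_exponent_split:
  fixes p q a b y :: real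
  assumes "p > 0" "q > 0"
  shows "- (y - a)\<^sup>2 / (2 * p) / 2 + - (y - b)\<^sup>2 / (2 * q) / 2
       = - (a - b)\<^sup>2 / (4 * (p + q)) + - (y - (a * q + b * p) / (p + q))\<^sup>2 / (2 * (2 * p * q / (p + q)))"
proof -
  define D where "D = 4 * p * q * (p + q)"
  define Z where "Z = (y - a) * q + (y - b) * p"
  have pq: "p + q \<noteq> 0" using assms by simp
  have over_D: "u / v = u * (D / v) / D" if "v \<noteq> 0" for u v
    using that assms pq by (simp add: D_def)
  have eq: "y - (a * q + b * p) / (p + q) = Z / (p + q)" using pq by (simp add: Z_def field_simps)
  have den: "(p + q)\<^sup>2 * (2 * (2 * p * q / (p + q))) = D"
    using pq by (simp add: D_def power2_eq_square field_simps)
  have centre_term: "- (y - (a * q + b * p) / (p + q))\<^sup>2 / (2 * (2 * p * q / (p + q))) = - Z\<^sup>2 / D"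
    unfolding eq power_divide divide_divide_eq_left den minus_divide_left ..
  have a_term: "- (y - a)\<^sup>2 / (2 * p) / 2 = - (y - a)\<^sup>2 * (q * (p + q)) / D"
    using assms by (subst over_D) (simp_all add: D_def)
  have b_term: "- (y - b)\<^sup>2 / (2 * q) / 2 = - (y - b)\<^sup>2 * (p * (p + q)) / D"
    using assms by (subst over_D) (simp_all add: D_def)
  have gap_term: "- (a - b)\<^sup>2 / (4 * (p + q)) = - (a - b)\<^sup>2 * (p * q) / D"
    using assms pq by (subst over_D) (simp_all add: D_def)
  have numerators: "- (y - a)\<^sup>2 * (q * (p + q)) + - (y - b)\<^sup>2 * (p * (p + q)) = - (a - b)\<^sup>2 * (p * q) + - Z\<^sup>2"
    by (simp add: Z_def power2_eq_square algebra_simps)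
  show ?thesis unfolding a_term b_term gap_term centre_term add_divide_distrib[symmetric] numerators ..
qed

lemma gauss_prefactor:
  fixes p q :: real
  assumes "p > 0" "q > 0"
  shows "sqrt (2 * sqrt (p * q) / (p + q)) / sqrt (2 * pi * (2 * p * q / (p + q)))
       = 1 / (sqrt (sqrt (2 * pi * p)) * sqrt (sqrt (2 * pi * q)))"
proof -
  have "sqrt (2 * pi * p) * sqrt (2 * pi * q) = sqrt ((2 * pi)\<^sup>2 * (p * q))"
    by (simp add: power2_eq_square mult_ac flip: real_sqrt_mult)
  also have "\<dots> = 2 * pi * sqrt (p * q)" by (simp add: real_sqrt_mult)
  finally have denom: "sqrt (sqrt (2 * pi * p)) * sqrt (sqrt (2 * pi * q)) = sqrt (2 * pi * sqrt (p * q))"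
    by (simp flip: real_sqrt_mult)
  have ratio: "2 * sqrt (p * q) / (p + q) / (2 * pi * (2 * p * q / (p + q))) = 1 / (2 * pi * sqrt (p * q))"
  proof -
    have "sqrt (p * q) > 0" "p * q = sqrt (p * q) * sqrt (p * q)" using assms by simp_all
    then obtain s where s: "s > 0" "sqrt (p * q) = s" "p * q = s * s" by blast
    have pq: "2 * p * q / (p + q) = 2 * (s * s) / (p + q)" by (simp add: s(3) mult.assoc)
    have "2 * s / P / (2 * pi * (2 * (s * s) / P)) = 1 / (2 * pi * s)" if "P > 0" for P
      using that s(1) pi_gt_zero by (simp add: field_simps)
    then show ?thesis unfolding s(2) pq using assms by simp
  qed
  have "sqrt (2 * sqrt (p * q) / (p + q)) / sqrt (2 * pi * (2 * p * q / (p + q)))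
      = sqrt (2 * sqrt (p * q) / (p + q) / (2 * pi * (2 * p * q / (p + q))))"
    by (simp add: real_sqrt_divide)
  also have "\<dots> = 1 / sqrt (2 * pi * sqrt (p * q))" unfolding ratio by (simp add: real_sqrt_divide)
  finally show ?thesis by (simp only: denom)
qed

lemma sqrt_normal_density_mult:
  fixes a b p q y :: real
  assumes "p > 0" "q > 0"
  shows "sqrt (normal_density a (sqrt p) y) * sqrt (normal_density b (sqrt q) y)
       = gauss_affinity a b p q * normal_density ((a * q + b * p) / (p + q)) (sqrt (2 * p * q / (p + q))) y"
proof -
  have s: "2 * p * q / (p + q) > 0" using assms by simp
  have "sqrt (normal_density a (sqrt p) y) * sqrt (normal_density b (sqrt q) y)
      = exp (- (y - a)\<^sup>2 / (2 * p) / 2) * exp (- (y - b)\<^sup>2 / (2 * q) / 2)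
        / (sqrt (sqrt (2 * pi * p)) * sqrt (sqrt (2 * pi * q)))"
    using assms by (simp add: normal_density_sqrt_variance real_sqrt_divide sqrt_exp)
  also have "\<dots> = exp (- (y - a)\<^sup>2 / (2 * p) / 2 + - (y - b)\<^sup>2 / (2 * q) / 2)
        * (1 / (sqrt (sqrt (2 * pi * p)) * sqrt (sqrt (2 * pi * q))))"
    by (simp only: exp_add) simp
  also have "\<dots> = exp (- (a - b)\<^sup>2 / (4 * (p + q)))
        * exp (- (y - (a * q + b * p) / (p + q))\<^sup>2 / (2 * (2 * p * q / (p + q))))
        * (sqrt (2 * sqrt (p * q) / (p + q)) / sqrt (2 * pi * (2 * p * q / (p + q))))"
    by (simp only: gauss_exponent_split[OF assms] gauss_prefactor[OF assms] exp_add)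
  also have "\<dots> = gauss_affinity a b p q * normal_density ((a * q + b * p) / (p + q)) (sqrt (2 * p * q / (p + q))) y"
    unfolding gauss_affinity_def normal_density_def using s by (simp add: mult_ac)
  finally show ?thesis .
qed

lemma nn_integral_hellinger_normal_density:
  fixes a b p q :: real
  assumes "p > 0" "q > 0"
  shows "(\<integral>\<^sup>+ y. ennreal ((sqrt (normal_density a (sqrt p) y) - sqrt (normal_density b (sqrt q) y))\<^sup>2) \<partial>lborel)
       = ennreal (2 - 2 * gauss_affinity a b p q)"
proof -
  define m where "m = (a * q + b * p) / (p + q)"
  define s where "s = sqrt (2 * p * q / (p + q))"
  have pos: "sqrt p > 0" "sqrt q > 0" "s > 0" using assms by (simp_all add: s_def)
  define F where "F y = normal_density a (sqrt p) y + normal_density b (sqrt q) y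
                        - 2 * gauss_affinity a b p q * normal_density m s y" for y
  have F: "(sqrt (normal_density a (sqrt p) y) - sqrt (normal_density b (sqrt q) y))\<^sup>2 = F y" for y
  proof -
    have "(sqrt (normal_density a (sqrt p) y) - sqrt (normal_density b (sqrt q) y))\<^sup>2
        = normal_density a (sqrt p) y + normal_density b (sqrt q) y
          - 2 * (sqrt (normal_density a (sqrt p) y) * sqrt (normal_density b (sqrt q) y))"
      by (simp add: power2_diff mult.assoc)
    then show ?thesis by (simp add: F_def m_def s_def sqrt_normal_density_mult[OF assms] mult.assoc)
  qed
  have "(\<integral>\<^sup>+ y. ennreal ((sqrt (normal_density a (sqrt p) y) - sqrt (normal_density b (sqrt q) y))\<^sup>2) \<partial>lborel)
      = (\<integral>\<^sup>+ y. ennreal (F y) \<partial>lborel)"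
    by (simp only: F)
  also have "\<dots> = ennreal (\<integral> y. F y \<partial>lborel)"
  proof (rule nn_integral_eq_integral)
    show "integrable lborel F" using pos by (simp add: F_def[abs_def])
    show "AE y in lborel. 0 \<le> F y" by (simp flip: F)
  qed
  also have "(\<integral> y. F y \<partial>lborel) = 2 - 2 * gauss_affinity a b p q"
    using pos by (simp add: F_def)
  finally show ?thesis .
qed

lemma one_minus_bhattacharyya_exp_le:
  fixes f1 f2 :: real
  shows "1 - 2 * sqrt (exp f1 * exp f2) / (exp f1 + exp f2) \<le> (f1 - f2)\<^sup>2 / 4"
proof (induction f2 f1 rule: linorder_wlog)
  case (le u v)
  define x where "x = exp (v / 2)"
  define z where "z = exp (u / 2)"
  define t where "t = (v - u) / 2"
  have pos: "x > 0" "z > 0" by (simp_all add: x_def z_def)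
  have exps: "exp v = x\<^sup>2" "exp u = z\<^sup>2"
    by (simp_all add: x_def z_def power2_eq_square flip: exp_add)
  have "1 - 2 * sqrt (exp v * exp u) / (exp v + exp u) = (x - z)\<^sup>2 / (x\<^sup>2 + z\<^sup>2)"
    using pos by (simp add: exps real_sqrt_mult field_simps power2_diff)
  also have "\<dots> \<le> (x - z)\<^sup>2 / x\<^sup>2"
    using pos by (intro divide_left_mono mult_pos_pos add_pos_pos) auto
  also have "\<dots> = ((x - z) / x)\<^sup>2" by (simp add: power_divide)
  also have "(x - z) / x = 1 - z / x" using pos by (simp add: field_simps)
  also have "z / x = exp (- t)"
  proof -
    have "- t = u / 2 - v / 2" by (simp add: t_def field_simps)
    then show ?thesis by (simp add: x_def z_def exp_diff)
  qed
  also have "(1 - exp (- t))\<^sup>2 \<le> t\<^sup>2"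
  proof (rule power_mono)
    show "1 - exp (- t) \<le> t" using exp_ge_add_one_self[of "- t"] by linarith
    show "0 \<le> 1 - exp (- t)" using le by (simp add: t_def)
  qed
  also have "\<dots> = (v - u)\<^sup>2 / 4" by (simp add: t_def power_divide)
  finally show ?case .
next
  case (sym u v)
  then show ?case by (simp add: mult.commute add.commute power2_commute)
qed

lemma gauss_affinity_exp_lower_bound:
  fixes a b f1 f2 N :: real
  assumes "- N \<le> f1" "- N \<le> f2"
  shows "2 - 2 * gauss_affinity a b (exp f1) (exp f2) \<le> exp N / 4 * (a - b)\<^sup>2 + 1 / 2 * (f1 - f2)\<^sup>2"
proof -
  define D where "D = exp f1 + exp f2"
  define r where "r = 2 * sqrt (exp f1 * exp f2) / D"
  define E where "E = exp (- (a - b)\<^sup>2 / (4 * D))"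
  have "exp (- N) \<le> exp f1" "exp (- N) \<le> exp f2" using assms by simp_all
  then have D: "D \<ge> 2 * exp (- N)" unfolding D_def by linarith
  have D0: "D > 0" by (simp add: D_def add_pos_pos)
  have "sqrt (exp f1 * exp f2) \<le> D / 2" unfolding D_def by (rule arith_geo_mean_sqrt) simp_all
  then have r: "0 \<le> r" "r \<le> 1" using D0 by (simp_all add: r_def divide_le_eq)
  have E: "0 \<le> E" "E \<le> 1" using D0 by (simp_all add: E_def)
  have "1 - sqrt r * E = (1 - sqrt r) + sqrt r * (1 - E)" by (simp add: algebra_simps)
  also have "\<dots> \<le> (1 - r) + (1 - E)"
  proof (intro add_mono)
    have "r = sqrt r * sqrt r" using r by simp
    also have "\<dots> \<le> sqrt r" using r by (intro mult_left_le_one_le) simp_all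
    finally show "1 - sqrt r \<le> 1 - r" by simp
    show "sqrt r * (1 - E) \<le> 1 - E" using r E by (intro mult_left_le_one_le) simp_all
  qed
  also have "1 - r \<le> (f1 - f2)\<^sup>2 / 4"
    using one_minus_bhattacharyya_exp_le[of f1 f2] by (simp add: r_def D_def)
  also have "1 - E \<le> (a - b)\<^sup>2 / (4 * D)"
    using exp_ge_add_one_self[of "- (a - b)\<^sup>2 / (4 * D)"] by (simp add: E_def)
  also have "\<dots> \<le> (a - b)\<^sup>2 / (8 * exp (- N))"
    using D D0 by (intro divide_left_mono) simp_all
  also have "\<dots> = exp N / 8 * (a - b)\<^sup>2" by (simp add: exp_minus field_simps)
  finally have "1 - sqrt r * E \<le> (f1 - f2)\<^sup>2 / 4 + exp N / 8 * (a - b)\<^sup>2" by simp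
  moreover have "gauss_affinity a b (exp f1) (exp f2) = sqrt r * E"
    by (simp add: gauss_affinity_def r_def E_def D_def)
  ultimately show ?thesis by simp
qed

lemma ennreal_lincomb:
  fixes c d u v :: real
  assumes "0 \<le> c" "0 \<le> d" "0 \<le> u" "0 \<le> v"
  shows "ennreal (c * u + d * v) = ennreal c * ennreal u + ennreal d * ennreal v"
  using assms by (simp add: ennreal_plus ennreal_mult)

lemma dn_sq_le_L2_sq:
  fixes Q :: "'x measure" and \<eta>1 \<eta>2 f1 f2 :: "'x \<Rightarrow> real"
  assumes bound: "\<And>x. x \<in> space Q \<Longrightarrow> - N \<le> f1 x \<and> - N \<le> f2 x"
    and [measurable]: "\<eta>1 \<in> borel_measurable Q" "\<eta>2 \<in> borel_measurable Q"
      "f1 \<in> borel_measurable Q" "f2 \<in> borel_measurable Q"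
  shows "dn_sq Q (\<eta>1, f1) (\<eta>2, f2) \<le> ennreal (exp N / 4) * L2_sq Q \<eta>1 \<eta>2 + ennreal (1 / 2) * L2_sq Q f1 f2"
proof -
  have "dn_sq Q (\<eta>1, f1) (\<eta>2, f2)
      = (\<integral>\<^sup>+ x. ennreal (2 - 2 * gauss_affinity (\<eta>1 x) (\<eta>2 x) (exp (f1 x)) (exp (f2 x))) \<partial>Q)"
    unfolding dn_sq_def
    by (simp add: gauss_dens_exp_eq_normal_density nn_integral_hellinger_normal_density)
  also have "\<dots> \<le> (\<integral>\<^sup>+ x. ennreal (exp N / 4) * ennreal ((\<eta>1 x - \<eta>2 x)\<^sup>2)
                         + ennreal (1 / 2) * ennreal ((f1 x - f2 x)\<^sup>2) \<partial>Q)"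
  proof (rule nn_integral_mono)
    fix x assume "x \<in> space Q"
    then have "2 - 2 * gauss_affinity (\<eta>1 x) (\<eta>2 x) (exp (f1 x)) (exp (f2 x))
        \<le> exp N / 4 * (\<eta>1 x - \<eta>2 x)\<^sup>2 + 1 / 2 * (f1 x - f2 x)\<^sup>2"
      using bound by (intro gauss_affinity_exp_lower_bound) auto
    then have "ennreal (2 - 2 * gauss_affinity (\<eta>1 x) (\<eta>2 x) (exp (f1 x)) (exp (f2 x)))
        \<le> ennreal (exp N / 4 * (\<eta>1 x - \<eta>2 x)\<^sup>2 + 1 / 2 * (f1 x - f2 x)\<^sup>2)"
      by (rule ennreal_leI)
    also have "\<dots> = ennreal (exp N / 4) * ennreal ((\<eta>1 x - \<eta>2 x)\<^sup>2) + ennreal (1 / 2) * ennreal ((f1 x - f2 x)\<^sup>2)"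
      by (rule ennreal_lincomb) auto
    finally show "ennreal (2 - 2 * gauss_affinity (\<eta>1 x) (\<eta>2 x) (exp (f1 x)) (exp (f2 x)))
        \<le> ennreal (exp N / 4) * ennreal ((\<eta>1 x - \<eta>2 x)\<^sup>2) + ennreal (1 / 2) * ennreal ((f1 x - f2 x)\<^sup>2)" .
  qed
  also have "\<dots> = ennreal (exp N / 4) * L2_sq Q \<eta>1 \<eta>2 + ennreal (1 / 2) * L2_sq Q f1 f2"
    unfolding L2_sq_def by (simp add: nn_integral_add nn_integral_cmult)
  finally show ?thesis .
qed

lemma covering_number_le_card:
  assumes "finite C" "C \<subseteq> S" "S \<subseteq> (\<Union>c\<in>C. {s. d c s \<le> ennreal (e\<^sup>2)})"
  shows "covering_number d e S \<le> enat (card C)"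
  unfolding covering_number_def by (rule INF_lower) (use assms in auto)

lemma covering_number_finiteE:
  assumes "covering_number d e S < \<infinity>"
  obtains C where "finite C" "C \<subseteq> S" "S \<subseteq> (\<Union>c\<in>C. {s. d c s \<le> ennreal (e\<^sup>2)})"
    "covering_number d e S = enat (card C)"
proof -
  define cards where "cards = (\<lambda>C. enat (card C)) `
    {C. finite C \<and> C \<subseteq> S \<and> S \<subseteq> (\<Union>c\<in>C. {s. d c s \<le> ennreal (e\<^sup>2)})}"
  have eq: "covering_number d e S = Inf cards" by (simp add: covering_number_def cards_def)
  with assms have "cards \<noteq> {}" by (auto simp: Inf_enat_def)
  then have "Inf cards \<in> cards" by (auto simp: Inf_enat_def intro: LeastI)
  with eq that show ?thesis by (auto simp: cards_def)
qed

lemma covering_number_Times_le: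
  assumes "covering_number d1 e1 S1 < \<infinity>" "covering_number d2 e2 S2 < \<infinity>"
    and "\<And>c1 s1 c2 s2. c1 \<in> S1 \<Longrightarrow> s1 \<in> S1 \<Longrightarrow> c2 \<in> S2 \<Longrightarrow> s2 \<in> S2 \<Longrightarrow>
           d1 c1 s1 \<le> ennreal (e1\<^sup>2) \<Longrightarrow> d2 c2 s2 \<le> ennreal (e2\<^sup>2) \<Longrightarrow>
           d (c1, c2) (s1, s2) \<le> ennreal (e\<^sup>2)"
  shows "covering_number d e (S1 \<times> S2) \<le> covering_number d1 e1 S1 * covering_number d2 e2 S2"
proof -
  obtain C1 where C1: "finite C1" "C1 \<subseteq> S1" "S1 \<subseteq> (\<Union>c\<in>C1. {s. d1 c s \<le> ennreal (e1\<^sup>2)})"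
    "covering_number d1 e1 S1 = enat (card C1)"
    using assms(1) by (rule covering_number_finiteE)
  obtain C2 where C2: "finite C2" "C2 \<subseteq> S2" "S2 \<subseteq> (\<Union>c\<in>C2. {s. d2 c s \<le> ennreal (e2\<^sup>2)})"
    "covering_number d2 e2 S2 = enat (card C2)"
    using assms(2) by (rule covering_number_finiteE)
  have "S1 \<times> S2 \<subseteq> (\<Union>c\<in>C1 \<times> C2. {s. d c s \<le> ennreal (e\<^sup>2)})"
  proof
    fix z assume "z \<in> S1 \<times> S2"
    then obtain s1 s2 where z: "z = (s1, s2)" "s1 \<in> S1" "s2 \<in> S2" by auto
    then obtain c1 c2 where "c1 \<in> C1" "d1 c1 s1 \<le> ennreal (e1\<^sup>2)" "c2 \<in> C2" "d2 c2 s2 \<le> ennreal (e2\<^sup>2)"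
      using C1(3) C2(3) by blast
    with z C1(2) C2(2) assms(3)[of c1 s1 c2 s2] show "z \<in> (\<Union>c\<in>C1 \<times> C2. {s. d c s \<le> ennreal (e\<^sup>2)})"
      by blast
  qed
  then have "covering_number d e (S1 \<times> S2) \<le> enat (card (C1 \<times> C2))"
    using C1 C2 by (intro covering_number_le_card) auto
  with C1(4) C2(4) show ?thesis by (simp add: card_cartesian_product)
qed

text \<open>Since ln 0 = 0, empty covers need no separate treatment.\<close>
lemma ln_the_enat_le_of_le_mult:
  fixes x y z :: enat
  assumes "x \<le> y * z" "y < \<infinity>" "z < \<infinity>"
  shows "x < \<infinity> \<and> ln (real (the_enat x)) \<le> ln (real (the_enat y)) + ln (real (the_enat z))"
proof -
  obtain m n where yz: "y = enat m" "z = enat n" using assms(2,3) by auto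
  then obtain k where k: "x = enat k" "k \<le> m * n" using assms(1) by (cases x) auto
  have "ln (real k) \<le> ln (real m) + ln (real n)"
  proof (cases "k = 0")
    case True
    have "0 \<le> ln (real j)" for j :: nat by (cases "j = 0") auto
    with True show ?thesis by (simp add: add_nonneg_nonneg)
  next
    case False
    with k have pos: "m > 0" "n > 0" by (auto intro: Nat.gr0I)
    have "real k \<le> real m * real n" using k(2) by (metis of_nat_le_iff of_nat_mult)
    then have "ln (real k) \<le> ln (real m * real n)" using False pos by (subst ln_le_cancel_iff) auto
    also have "\<dots> = ln (real m) + ln (real n)" using pos by (simp add: ln_mult)
    finally show ?thesis .
  qed
  with k yz show ?thesis by simp
qed

lemma covering_number_dn_sq_le:
  fixes Q :: "'x measure" and T\<eta> Tf :: "('x \<Rightarrow> real) set" and N \<epsilon> :: real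
  assumes "\<forall>\<eta>\<in>T\<eta>. \<eta> \<in> borel_measurable Q" "\<forall>f\<in>Tf. f \<in> borel_measurable Q"
    and "N \<ge> 0" "\<forall>f\<in>Tf. \<forall>x\<in>space Q. \<bar>f x\<bar> \<le> N"
    and "covering_number (L2_sq Q) (\<epsilon> / exp N) T\<eta> < \<infinity>" "covering_number (L2_sq Q) \<epsilon> Tf < \<infinity>"
  shows "covering_number (dn_sq Q) (3 * \<epsilon>) (T\<eta> \<times> Tf)
       \<le> covering_number (L2_sq Q) (\<epsilon> / exp N) T\<eta> * covering_number (L2_sq Q) \<epsilon> Tf"
proof (rule covering_number_Times_le[OF assms(5,6)])
  have lower: "- N \<le> f x" if "f \<in> Tf" "x \<in> space Q" for f x
    using assms(4) that by (metis abs_le_D2 neg_le_iff_le minus_le_iff)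
  fix c1 s1 c2 s2
  assume "c1 \<in> T\<eta>" "s1 \<in> T\<eta>" "c2 \<in> Tf" "s2 \<in> Tf"
    and close: "L2_sq Q c1 s1 \<le> ennreal ((\<epsilon> / exp N)\<^sup>2)" "L2_sq Q c2 s2 \<le> ennreal (\<epsilon>\<^sup>2)"
  then have "dn_sq Q (c1, c2) (s1, s2) \<le> ennreal (exp N / 4) * L2_sq Q c1 s1 + ennreal (1 / 2) * L2_sq Q c2 s2"
    using assms(1,2) lower by (intro dn_sq_le_L2_sq) auto
  also have "\<dots> \<le> ennreal (exp N / 4) * ennreal ((\<epsilon> / exp N)\<^sup>2) + ennreal (1 / 2) * ennreal (\<epsilon>\<^sup>2)"
    using close by (intro add_mono mult_left_mono) auto
  also have "\<dots> = ennreal (exp N / 4 * (\<epsilon> / exp N)\<^sup>2 + 1 / 2 * \<epsilon>\<^sup>2)"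
    by (rule ennreal_lincomb[symmetric]) auto
  also have "\<dots> \<le> ennreal ((3 * \<epsilon>)\<^sup>2)"
  proof (rule ennreal_leI)
    have "1 \<le> 4 * exp N" using assms(3) one_le_exp_iff[of N] by linarith
    have "exp N / 4 * (\<epsilon> / exp N)\<^sup>2 + 1 / 2 * \<epsilon>\<^sup>2 = \<epsilon>\<^sup>2 / (4 * exp N) + 1 / 2 * \<epsilon>\<^sup>2"
      by (simp add: power2_eq_square)
    also have "\<dots> \<le> \<epsilon>\<^sup>2 / 1 + 1 / 2 * \<epsilon>\<^sup>2"
      using \<open>1 \<le> 4 * exp N\<close> by (intro add_right_mono divide_left_mono) simp_all
    also have "\<dots> \<le> (3 * \<epsilon>)\<^sup>2"
      using zero_le_power2[of \<epsilon>] by (simp add: power_mult_distrib)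
    finally show "exp N / 4 * (\<epsilon> / exp N)\<^sup>2 + 1 / 2 * \<epsilon>\<^sup>2 \<le> (3 * \<epsilon>)\<^sup>2" .
  qed
  finally show "dn_sq Q (c1, c2) (s1, s2) \<le> ennreal ((3 * \<epsilon>)\<^sup>2)" .
qed

theorem lemma1:
  shows "\<exists>C>0. \<forall>(Q :: (real ^ 'd) measure) (\<Theta>\<eta> :: ((real ^ 'd) \<Rightarrow> real) set)
                 (\<Theta>f :: ((real ^ 'd) \<Rightarrow> real) set) (Nn :: real) (\<epsilon> :: real).
     prob_space Q \<and> sets Q = sets (restrict_space borel unit_cube) \<and>
     (\<forall>\<eta>\<in>\<Theta>\<eta>. \<eta> \<in> borel_measurable Q) \<and> (\<forall>f\<in>\<Theta>f. f \<in> borel_measurable Q) \<and>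
     Nn > 0 \<and> (\<forall>f\<in>\<Theta>f. \<forall>x\<in>unit_cube. \<bar>f x\<bar> \<le> Nn) \<and> \<epsilon> > 0 \<and>
     covering_number (L2_sq Q) (\<epsilon> / exp Nn) \<Theta>\<eta> < \<infinity> \<and>
     covering_number (L2_sq Q) \<epsilon> \<Theta>f < \<infinity>
     \<longrightarrow> covering_number (dn_sq Q) (3 * \<epsilon>) (\<Theta>\<eta> \<times> \<Theta>f) < \<infinity> \<and>
         ln (real (the_enat (covering_number (dn_sq Q) (3 * \<epsilon>) (\<Theta>\<eta> \<times> \<Theta>f))))
           \<le> C * (ln (real (the_enat (covering_number (L2_sq Q) (\<epsilon> / exp Nn) \<Theta>\<eta>)))
                  + ln (real (the_enat (covering_number (L2_sq Q) \<epsilon> \<Theta>f))))"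
proof (rule exI[of _ 1], rule conjI[OF zero_less_one], intro allI impI, goal_cases)
  case (1 Q \<Theta>\<eta> \<Theta>f Nn \<epsilon>)
  then have "space Q = unit_cube"
    by (auto dest!: sets_eq_imp_space_eq simp: space_restrict_space)
  with 1 have "covering_number (dn_sq Q) (3 * \<epsilon>) (\<Theta>\<eta> \<times> \<Theta>f)
      \<le> covering_number (L2_sq Q) (\<epsilon> / exp Nn) \<Theta>\<eta> * covering_number (L2_sq Q) \<epsilon> \<Theta>f"
    by (intro covering_number_dn_sq_le) auto
  with 1 show ?case using ln_the_enat_le_of_le_mult by simp
qed

end
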